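(* Let $\varPhi\subset\mathbb{E}^3$ be a skew ruled surface with invariants $\delta,\kappa,\lambda$, right normalized with support function $q=\frac{f(u)+g(u)v}{w}$, neither $f$ nor $g$ the zero function. Then the Tchebychev vector field $\overline{T}$ is incompressible with respect to the first fundamental form of $\varPhi$ (i.e. $\operatorname{div}^I\overline{T}=0$) if and only if $\varPhi$ is conoidal with constant distribution parameter $\delta=c_2\neq0$, $g$ is a nonvanishing constant $c_1$, and $f=c_1c_2\int\lambda\,\mathrm{d}u+c_3$, $c_3\in\mathbb{R}$.
   Context: $\varPhi$ is a ruled $C^r$-surface ($r\ge3$) with nonvanishing Gaussian curvature, in standard parameters $\overline{x}(u,v)=\overline{s}(u)+v\,\overline{e}(u)$, $|\overline{e}|=|\overline{e}'|=1$, $\langle\overline{s}',\overline{e}'\rangle=0$. Frame $\overline{n}=\overline{e}'$, $\overline{z}=\overline{e}\times\overline{n}$. Invariants: distribution parameter $\delta=(\overline{s}',\overline{e},\overline{e}')\neq0$, $\kappa=(\overline{e},\overline{e}',\overline{e}'')$, $\lambda=\cot\sphericalangle(\overline{e},\overline{s}')$, $\overline{s}'=\delta\lambda\overline{e}+\delta\overline{z}$. Conoidal means $\kappa\equiv0$. $w=\sqrt{\delta^2+v^2}$ (so $w^2$ is the discriminant of the first fundamental form), $\overline{\xi}=(\delta\overline{n}-v\overline{z})/w$. $h_{11}=-(\kappa w^2+\delta'v-\delta^2\lambda)/w$, $h_{12}=\delta/w$, $h_{22}=0$. A relative normalization is determined by its support function $q=\langle\overline{\xi},\overline{y}\rangle\neq0$;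 right normalization: $q=(f+gv)/w$, $f,g$ functions of $u$. Relative metric $G_{ij}=q^{-1}h_{ij}$, Darboux tensor $A_{ijk}=q^{-1}\langle\overline{\xi},\nabla^G_k\nabla^G_j\overline{x}_{/i}\rangle$, Tchebychev vector $\overline{T}=T^m\overline{x}_{/m}$, $T^m=\frac12A_i^{\ im}$; equivalently $T^1=\frac{w^2q_{/2}+vq}{\delta w}$, $T^2=\frac{2\delta w^2q_{/1}+\delta'q(\delta^2-v^2)}{2\delta^2w}+\frac{T^1(\kappa w^2+\delta'v-\delta^2\lambda)}{\delta}$. The divergence with respect to the first fundamental form is $\operatorname{div}^I\overline{T}=\frac{(wT^i)_{/i}}{w}$ (sum over $i$, $_{/1}=\partial_u$, $_{/2}=\partial_v$). $\int\cdots\mathrm{d}u$ denotes an antiderivative. *)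

theory Defs
  imports "HOL-Analysis.Analysis" "HOL-Analysis.Cross3"
begin

text \<open>Ruled surface x(u,v) = s(u) + v e(u) over an open u-interval I.
  All notions below are taken verbatim from the paper's setup.\<close>

definition vd :: "(real \<Rightarrow> real^3) \<Rightarrow> real \<Rightarrow> real^3" where
  "vd c = (\<lambda>t. vector_derivative c (at t))"

definition C3_on :: "real set \<Rightarrow> (real \<Rightarrow> real^3) \<Rightarrow> bool" where
  "C3_on I c \<longleftrightarrow> (\<forall>t\<in>I. c differentiable (at t) \<and> vd c differentiable (at t)
      \<and> vd (vd c) differentiable (at t)) \<and> continuous_on I (vd (vd (vd c)))"

definition standard_ruled :: "real set \<Rightarrow> (real \<Rightarrow> real^3) \<Rightarrow> (real \<Rightarrow> real^3) \<Rightarrow> bool" where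
  "standard_ruled I s e \<longleftrightarrow> C3_on I s \<and> C3_on I e \<and>
     (\<forall>u\<in>I. norm (e u) = 1 \<and> norm (vd e u) = 1 \<and> vd s u \<bullet> vd e u = 0)"

definition dparam :: "(real \<Rightarrow> real^3) \<Rightarrow> (real \<Rightarrow> real^3) \<Rightarrow> real \<Rightarrow> real" where
  "dparam s e u = vd s u \<bullet> cross3 (e u) (vd e u)"

definition kappa :: "(real \<Rightarrow> real^3) \<Rightarrow> real \<Rightarrow> real" where
  "kappa e u = e u \<bullet> cross3 (vd e u) (vd (vd e) u)"

text \<open>lambda, defined through s' = delta lambda e + delta z (z = e \<times> e').\<close>
definition lambda_inv :: "(real \<Rightarrow> real^3) \<Rightarrow> (real \<Rightarrow> real^3) \<Rightarrow> real \<Rightarrow> real" where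
  "lambda_inv s e u = (vd s u \<bullet> e u) / dparam s e u"

definition wfun :: "(real \<Rightarrow> real^3) \<Rightarrow> (real \<Rightarrow> real^3) \<Rightarrow> real \<Rightarrow> real \<Rightarrow> real" where
  "wfun s e u v = sqrt ((dparam s e u)\<^sup>2 + v\<^sup>2)"

definition qfun :: "(real \<Rightarrow> real^3) \<Rightarrow> (real \<Rightarrow> real^3) \<Rightarrow> (real \<Rightarrow> real) \<Rightarrow> (real \<Rightarrow> real)
    \<Rightarrow> real \<Rightarrow> real \<Rightarrow> real" where
  "qfun s e f g u v = (f u + g u * v) / wfun s e u v"

definition T1 :: "(real \<Rightarrow> real^3) \<Rightarrow> (real \<Rightarrow> real^3) \<Rightarrow> (real \<Rightarrow> real) \<Rightarrow> (real \<Rightarrow> real)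
    \<Rightarrow> real \<Rightarrow> real \<Rightarrow> real" where
  "T1 s e f g u v =
     ((wfun s e u v)\<^sup>2 * deriv (\<lambda>y. qfun s e f g u y) v + v * qfun s e f g u v)
       / (dparam s e u * wfun s e u v)"

definition T2 :: "(real \<Rightarrow> real^3) \<Rightarrow> (real \<Rightarrow> real^3) \<Rightarrow> (real \<Rightarrow> real) \<Rightarrow> (real \<Rightarrow> real)
    \<Rightarrow> real \<Rightarrow> real \<Rightarrow> real" where
  "T2 s e f g u v =
     (let d = dparam s e u; d' = deriv (dparam s e) u; w = wfun s e u v; q = qfun s e f g u v
      in (2 * d * w\<^sup>2 * deriv (\<lambda>x. qfun s e f g x v) u + d' * q * (d\<^sup>2 - v\<^sup>2)) / (2 * d\<^sup>2 * w)
         + T1 s e f g u v * (kappa e u * w\<^sup>2 + d' * v - d\<^sup>2 * lambda_inv s e u) / d)"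

definition divI_T :: "(real \<Rightarrow> real^3) \<Rightarrow> (real \<Rightarrow> real^3) \<Rightarrow> (real \<Rightarrow> real) \<Rightarrow> (real \<Rightarrow> real)
    \<Rightarrow> real \<Rightarrow> real \<Rightarrow> real" where
  "divI_T s e f g u v =
     (deriv (\<lambda>x. wfun s e x v * T1 s e f g x v) u
      + deriv (\<lambda>y. wfun s e u y * T2 s e f g u y) v) / wfun s e u v"

end

theory Submission
  imports Defs "HOL-Computational_Algebra.Polynomial"
begin

text \<open>The component \<open>T\<^sup>1 = g/\<delta>\<close> does not depend on \<open>v\<close> and \<open>T\<^sup>2\<close> is a quadratic
  polynomial in \<open>v\<close>, so \<open>w\<^sup>2 div\<^sup>I T\<close> is a cubic polynomial in \<open>v\<close> whose coefficients are
  \<open>2\<delta>g' + g\<delta>'/2\<close>, \<open>f'/\<delta> - \<delta>'f/(2\<delta>\<^sup>2) + 3g\<kappa> - g\<lambda>\<close>, \<open>3g'/\<delta>\<close> and \<open>3g\<kappa>/\<delta>\<^sup>2\<close>.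
  It vanishes on an interval of \<open>v\<close> iff all four coefficients vanish. Then \<open>g' = 0\<close>, so \<open>g\<close>
  is a nonzero constant, which forces \<open>\<kappa> = 0\<close>, \<open>\<delta>' = 0\<close> and \<open>f' = g\<delta>\<lambda>\<close>.\<close>

lemma differentiable_cross3:
  fixes f g :: "real \<Rightarrow> real^3"
  assumes "f differentiable (at t)" "g differentiable (at t)"
  shows "(\<lambda>x. cross3 (f x) (g x)) differentiable (at t)"
proof -
  have "bounded_bilinear cross3"
    using bilinear_conv_bounded_bilinear bilinear_cross by blast
  with assms show ?thesis
    unfolding differentiable_def using bounded_bilinear.FDERIV by blast
qed

lemma dparam_differentiable:
  assumes "standard_ruled I s e" "u \<in> I"
  shows "dparam s e differentiable (at u)"
proof -
  from assms have "s differentiable (at u)" "vd s differentiable (at u)"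
     "e differentiable (at u)" "vd e differentiable (at u)"
    unfolding standard_ruled_def C3_on_def by auto
  then have "(\<lambda>x. vd s x \<bullet> cross3 (e x) (vd e x)) differentiable (at u)"
    by (intro differentiable_inner differentiable_cross3)
  then show ?thesis unfolding dparam_def[abs_def] .
qed

lemma wfun_radicand_pos: "dparam s e u \<noteq> 0 \<Longrightarrow> 0 < (dparam s e u)\<^sup>2 + v\<^sup>2"
  by (simp add: add_pos_nonneg)

lemma wfun_pos: "dparam s e u \<noteq> 0 \<Longrightarrow> 0 < wfun s e u v"
  unfolding wfun_def by (simp add: wfun_radicand_pos)

lemma wfun_squared: "(wfun s e u v)\<^sup>2 = (dparam s e u)\<^sup>2 + v\<^sup>2"
  unfolding wfun_def by simp

lemma wfun_has_real_derivative_v: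
  assumes "dparam s e u \<noteq> 0"
  shows "((\<lambda>y. wfun s e u y) has_real_derivative v / wfun s e u v) (at v)"
  unfolding wfun_def using wfun_radicand_pos[OF assms, of v]
  by (auto intro!: derivative_eq_intros simp: power2_eq_square divide_simps)

lemma wfun_has_real_derivative_u:
  assumes "dparam s e u \<noteq> 0" "(dparam s e has_real_derivative D') (at u)"
  shows "((\<lambda>x. wfun s e x v) has_real_derivative dparam s e u * D' / wfun s e u v) (at u)"
  unfolding wfun_def using assms wfun_radicand_pos[OF assms(1), of v]
  by (auto intro!: derivative_eq_intros simp: power2_eq_square divide_simps)

lemma qfun_has_real_derivative_v:
  assumes "dparam s e u \<noteq> 0"
  shows "((\<lambda>y. qfun s e f g u y) has_real_derivative
     (g u * (dparam s e u)\<^sup>2 - f u * v) / (wfun s e u v)^3) (at v)"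
  unfolding qfun_def using wfun_pos[OF assms, of v] wfun_squared[of s e u v]
  by (auto intro!: derivative_eq_intros wfun_has_real_derivative_v[OF assms]
      simp: field_simps power3_eq_cube power2_eq_square)

lemma qfun_has_real_derivative_u:
  assumes "dparam s e u \<noteq> 0" "(dparam s e has_real_derivative D') (at u)"
    "(f has_real_derivative F') (at u)" "(g has_real_derivative G') (at u)"
  shows "((\<lambda>x. qfun s e f g x v) has_real_derivative
     (F' + G' * v) / wfun s e u v - (f u + g u * v) * dparam s e u * D' / (wfun s e u v)^3) (at u)"
  unfolding qfun_def using wfun_pos[OF assms(1), of v]
  by (auto intro!: derivative_eq_intros wfun_has_real_derivative_u[OF assms(1,2)] assms(3,4)
      simp: field_simps power3_eq_cube power2_eq_square)

lemma T1_eq: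
  assumes "dparam s e u \<noteq> 0"
  shows "T1 s e f g u v = g u / dparam s e u"
proof -
  have "T1 s e f g u v = g u * ((dparam s e u)\<^sup>2 + v\<^sup>2) / (dparam s e u * (wfun s e u v)\<^sup>2)"
    unfolding T1_def DERIV_imp_deriv[OF qfun_has_real_derivative_v[OF assms]] qfun_def
    using assms wfun_pos[OF assms, of v]
    by (simp add: field_simps power3_eq_cube power2_eq_square)
  then show ?thesis
    using wfun_pos[OF assms, of v] by (simp add: wfun_squared[symmetric])
qed

lemma T2_eq:
  fixes s e :: "real \<Rightarrow> real^3" and f g :: "real \<Rightarrow> real" and u :: real
  defines "D \<equiv> dparam s e u"
  assumes skew: "dparam s e u \<noteq> 0" and derivs: "(dparam s e has_real_derivative D') (at u)"
    "(f has_real_derivative F') (at u)" "(g has_real_derivative G') (at u)"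
  shows "T2 s e f g u v = (F' / D - D' * f u / (2 * D\<^sup>2) + g u * kappa e u - g u * lambda_inv s e u)
      + (G' / D + g u * D' / (2 * D\<^sup>2)) * v + (g u * kappa e u / D\<^sup>2) * v\<^sup>2"
proof -
  have D: "D \<noteq> 0" unfolding D_def by (rule skew)
  define W where "W = wfun s e u v"
  have W: "0 < W" "W\<^sup>2 = D\<^sup>2 + v\<^sup>2"
    unfolding W_def D_def using wfun_pos[OF skew] wfun_squared by auto
  let ?A = "F' + G' * v" and ?B = "f u + g u * v"
  let ?R = "g u * (kappa e u * W\<^sup>2 + D' * v - D\<^sup>2 * lambda_inv s e u) / D\<^sup>2"
  have "T2 s e f g u v = (2 * D * W\<^sup>2 * (?A / W - ?B * D * D' / W ^ 3)
      + D' * (?B / W) * (D\<^sup>2 - v\<^sup>2)) / (2 * D\<^sup>2 * W) + ?R"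
    unfolding T2_def Let_def DERIV_imp_deriv[OF qfun_has_real_derivative_u[OF skew derivs]]
      DERIV_imp_deriv[OF derivs(1)] T1_eq[OF skew]
    by (simp add: W_def D_def qfun_def power2_eq_square)
  also have "\<dots> = ?A / D - D' * ?B * (D\<^sup>2 + v\<^sup>2) / (2 * D\<^sup>2 * W\<^sup>2) + ?R"
    using W(1) D by (simp add: field_simps power3_eq_cube power2_eq_square)
  also have "\<dots> = ?A / D - D' * ?B / (2 * D\<^sup>2) + ?R"
    using W D by simp
  also have "\<dots> = (F' / D - D' * f u / (2 * D\<^sup>2) + g u * kappa e u - g u * lambda_inv s e u)
      + (G' / D + g u * D' / (2 * D\<^sup>2)) * v + (g u * kappa e u / D\<^sup>2) * v\<^sup>2"
    unfolding W(2) using D by (simp add: field_simps power2_eq_square)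
  finally show ?thesis .
qed

lemma divI_T_cubic:
  fixes s e :: "real \<Rightarrow> real^3" and f g :: "real \<Rightarrow> real" and u :: real
  defines "D \<equiv> dparam s e u"
  assumes "open S" "u \<in> S" and skew: "\<forall>x\<in>S. dparam s e x \<noteq> 0"
    and derivs: "(dparam s e has_real_derivative D') (at u)"
    "(f has_real_derivative F') (at u)" "(g has_real_derivative G') (at u)"
  shows "(wfun s e u v)\<^sup>2 * divI_T s e f g u v =
      (2 * D * G' + g u * D' / 2)
    + (F' / D - D' * f u / (2 * D\<^sup>2) + 3 * g u * kappa e u - g u * lambda_inv s e u) * v
    + (3 * G' / D) * v\<^sup>2 + (3 * g u * kappa e u / D\<^sup>2) * v ^ 3"
proof -
  have skew_u: "dparam s e u \<noteq> 0" using skew \<open>u \<in> S\<close> by blast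
  then have D: "D \<noteq> 0" unfolding D_def .
  define W where "W = wfun s e u v"
  have W: "0 < W" "W\<^sup>2 = D\<^sup>2 + v\<^sup>2"
    unfolding W_def D_def using wfun_pos[OF skew_u] wfun_squared by auto
  let ?b0 = "F' / D - D' * f u / (2 * D\<^sup>2) + g u * kappa e u - g u * lambda_inv s e u"
  let ?b1 = "G' / D + g u * D' / (2 * D\<^sup>2)" and ?b2 = "g u * kappa e u / D\<^sup>2"
  have "((\<lambda>x. wfun s e x v * (g x / dparam s e x)) has_real_derivative
      D * D' / W * (g u / D) + W * ((G' * D - g u * D') / D\<^sup>2)) (at u)"
    unfolding W_def D_def
    by (rule derivative_eq_intros wfun_has_real_derivative_u derivs skew_u refl)+
      (simp add: power2_eq_square)
  then have wT1: "((\<lambda>x. wfun s e x v * T1 s e f g x v) has_real_derivative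
      D * D' / W * (g u / D) + W * ((G' * D - g u * D') / D\<^sup>2)) (at u)"
    by (rule has_field_derivative_transform_within_open[OF _ \<open>open S\<close> \<open>u \<in> S\<close>])
      (simp add: T1_eq skew)
  have "((\<lambda>y. wfun s e u y * (?b0 + ?b1 * y + ?b2 * y\<^sup>2)) has_real_derivative
      v / W * (?b0 + ?b1 * v + ?b2 * v\<^sup>2) + W * (?b1 + 2 * ?b2 * v)) (at v)"
    unfolding W_def
    by (rule derivative_eq_intros wfun_has_real_derivative_v skew_u refl)+ simp
  then have wT2: "((\<lambda>y. wfun s e u y * T2 s e f g u y) has_real_derivative
      v / W * (?b0 + ?b1 * v + ?b2 * v\<^sup>2) + W * (?b1 + 2 * ?b2 * v)) (at v)"
    by (simp add: T2_eq[OF skew_u derivs, folded D_def])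
  have "W\<^sup>2 * divI_T s e f g u v = D' * g u + W\<^sup>2 * ((G' * D - g u * D') / D\<^sup>2)
      + v * (?b0 + ?b1 * v + ?b2 * v\<^sup>2) + W\<^sup>2 * (?b1 + 2 * ?b2 * v)"
    unfolding divI_T_def DERIV_imp_deriv[OF wT1] DERIV_imp_deriv[OF wT2] W_def[symmetric]
    using W(1) D by (simp add: field_simps power2_eq_square)
  also have "\<dots> = (2 * D * G' + g u * D' / 2)
    + (F' / D - D' * f u / (2 * D\<^sup>2) + 3 * g u * kappa e u - g u * lambda_inv s e u) * v
    + (3 * G' / D) * v\<^sup>2 + (3 * g u * kappa e u / D\<^sup>2) * v ^ 3"
    unfolding W(2) using D by (simp add: field_simps power2_eq_square power3_eq_cube)
  finally show ?thesis unfolding W_def .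
qed

lemma cubic_coeffs_eq_0_if_roots_infinite:
  fixes a0 a1 a2 a3 :: real
  assumes "infinite S" "\<forall>v\<in>S. a0 + a1 * v + a2 * v\<^sup>2 + a3 * v ^ 3 = 0"
  shows "a0 = 0 \<and> a1 = 0 \<and> a2 = 0 \<and> a3 = 0"
proof -
  have "poly [:a0, a1, a2, a3:] v = a0 + a1 * v + a2 * v\<^sup>2 + a3 * v ^ 3" for v
    by (simp add: algebra_simps power2_eq_square power3_eq_cube)
  with assms(2) have "S \<subseteq> {v. poly [:a0, a1, a2, a3:] v = 0}" by auto
  with assms(1) have "[:a0, a1, a2, a3:] = 0"
    using poly_roots_finite finite_subset by blast
  then show ?thesis by simp
qed

text \<open>The coefficients of the cubic in \<open>divI_T_cubic\<close>, the last two stripped of their nonzero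
  factors \<open>3/\<delta>\<close> and \<open>3/\<delta>\<^sup>2\<close>.\<close>
definition div_coeffs_vanish ::
    "(real \<Rightarrow> real) \<Rightarrow> (real \<Rightarrow> real) \<Rightarrow> (real \<Rightarrow> real) \<Rightarrow> (real \<Rightarrow> real) \<Rightarrow> (real \<Rightarrow> real) \<Rightarrow> real \<Rightarrow> bool"
  where "div_coeffs_vanish \<delta> f g \<kappa> lam u \<longleftrightarrow>
    2 * \<delta> u * deriv g u + g u * deriv \<delta> u / 2 = 0 \<and>
    deriv f u / \<delta> u - deriv \<delta> u * f u / (2 * (\<delta> u)\<^sup>2) + 3 * g u * \<kappa> u - g u * lam u = 0 \<and>
    deriv g u = 0 \<and> g u * \<kappa> u = 0"

lemma divI_T_vanishes_iff:
  assumes "open S" "u \<in> S" "\<forall>x\<in>S. dparam s e x \<noteq> 0" "infinite J"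
    "dparam s e differentiable (at u)" "f differentiable (at u)" "g differentiable (at u)"
  shows "(\<forall>v\<in>J. divI_T s e f g u v = 0) \<longleftrightarrow>
    div_coeffs_vanish (dparam s e) f g (kappa e) (lambda_inv s e) u"
proof -
  let ?D = "dparam s e u"
  let ?a0 = "2 * ?D * deriv g u + g u * deriv (dparam s e) u / 2"
  let ?a1 = "deriv f u / ?D - deriv (dparam s e) u * f u / (2 * ?D\<^sup>2)
    + 3 * g u * kappa e u - g u * lambda_inv s e u"
  let ?a2 = "3 * deriv g u / ?D" and ?a3 = "3 * g u * kappa e u / ?D\<^sup>2"
  have D: "?D \<noteq> 0" using assms by auto
  have cubic: "(wfun s e u v)\<^sup>2 * divI_T s e f g u v = ?a0 + ?a1 * v + ?a2 * v\<^sup>2 + ?a3 * v ^ 3" for v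
    using assms(5-7) unfolding DERIV_deriv_iff_real_differentiable[symmetric]
    by (rule divI_T_cubic[OF assms(1-3)])
  have "divI_T s e f g u v = 0 \<longleftrightarrow> ?a0 + ?a1 * v + ?a2 * v\<^sup>2 + ?a3 * v ^ 3 = 0" for v
    unfolding cubic[symmetric] using wfun_pos[OF D, of v] by simp
  then have "(\<forall>v\<in>J. divI_T s e f g u v = 0) \<longleftrightarrow>
      (\<forall>v\<in>J. ?a0 + ?a1 * v + ?a2 * v\<^sup>2 + ?a3 * v ^ 3 = 0)"
    by blast
  also have "\<dots> \<longleftrightarrow> ?a0 = 0 \<and> ?a1 = 0 \<and> ?a2 = 0 \<and> ?a3 = 0"
  proof
    assume "?a0 = 0 \<and> ?a1 = 0 \<and> ?a2 = 0 \<and> ?a3 = 0"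
    then show "\<forall>v\<in>J. ?a0 + ?a1 * v + ?a2 * v\<^sup>2 + ?a3 * v ^ 3 = 0"
      by (simp only:) simp
  qed (rule cubic_coeffs_eq_0_if_roots_infinite[OF assms(4)])
  also have "\<dots> \<longleftrightarrow> div_coeffs_vanish (dparam s e) f g (kappa e) (lambda_inv s e) u"
    using D by (simp add: div_coeffs_vanish_def)
  finally show ?thesis .
qed

lemma div_coeffs_vanish_on_interval_imp:
  fixes \<delta> f g \<kappa> lam :: "real \<Rightarrow> real" and a b u0 :: real
  defines "I \<equiv> {a<..<b}"
  assumes "a < b" and diff: "\<forall>u\<in>I. \<delta> differentiable (at u) \<and> f differentiable (at u) \<and> g differentiable (at u)"
    and \<delta>_nz: "\<forall>u\<in>I. \<delta> u \<noteq> 0" and coeffs: "\<forall>u\<in>I. div_coeffs_vanish \<delta> f g \<kappa> lam u"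
    and u0: "u0 \<in> I" "g u0 \<noteq> 0" and "u \<in> I"
  shows "\<kappa> u = 0 \<and> \<delta> u = \<delta> u0 \<and> g u = g u0 \<and> (f has_real_derivative g u0 * \<delta> u0 * lam u) (at u)"
proof -
  have coeffs_at: "div_coeffs_vanish \<delta> f g \<kappa> lam x" if "x \<in> I" for x
    using coeffs that by blast
  have derivs: "(\<delta> has_real_derivative deriv \<delta> x) (at x)" "(f has_real_derivative deriv f x) (at x)"
    "(g has_real_derivative deriv g x) (at x)" if "x \<in> I" for x
    using diff that DERIV_deriv_iff_real_differentiable by blast+
  have const: "h x = h u0" if "\<And>y. y \<in> I \<Longrightarrow> (h has_real_derivative 0) (at y)" "x \<in> I"
    for h :: "real \<Rightarrow> real" and x
    using DERIV_isconst3[OF \<open>a < b\<close>] that u0(1) unfolding I_def by blast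
  have g: "g x = g u0" if "x \<in> I" for x
    using derivs(3) coeffs_at by (intro const[OF _ that]) (simp add: div_coeffs_vanish_def)
  have \<delta>': "deriv \<delta> x = 0" if "x \<in> I" for x
    using coeffs_at[OF that] g[OF that] u0(2) by (auto simp: div_coeffs_vanish_def)
  have \<delta>: "\<delta> u = \<delta> u0"
    using derivs(1) \<delta>' by (intro const[OF _ \<open>u \<in> I\<close>]) simp
  have \<kappa>: "\<kappa> u = 0"
    using coeffs_at[OF \<open>u \<in> I\<close>] g[OF \<open>u \<in> I\<close>] u0(2) by (simp add: div_coeffs_vanish_def)
  have "deriv f u / \<delta> u0 - g u0 * lam u = 0"
    using coeffs_at[OF \<open>u \<in> I\<close>] g[OF \<open>u \<in> I\<close>] \<kappa> \<delta>'[OF \<open>u \<in> I\<close>] \<delta>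
    by (simp add: div_coeffs_vanish_def)
  then have "deriv f u = g u0 * \<delta> u0 * lam u"
    using \<delta>_nz u0(1) by (simp add: field_simps)
  with derivs(2)[OF \<open>u \<in> I\<close>] \<kappa> \<delta> g[OF \<open>u \<in> I\<close>] show ?thesis
    by simp
qed

lemma div_coeffs_vanish_on_interval_iff:
  fixes \<delta> f g \<kappa> lam :: "real \<Rightarrow> real" and a b :: real
  defines "I \<equiv> {a<..<b}"
  assumes "a < b" and diff: "\<forall>u\<in>I. \<delta> differentiable (at u) \<and> f differentiable (at u) \<and> g differentiable (at u)"
    and \<delta>_nz: "\<forall>u\<in>I. \<delta> u \<noteq> 0" and g_nz: "\<exists>u\<in>I. g u \<noteq> 0"
  shows "(\<forall>u\<in>I. div_coeffs_vanish \<delta> f g \<kappa> lam u) \<longleftrightarrow>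
         ((\<forall>u\<in>I. \<kappa> u = 0) \<and>
          (\<exists>c1 c2 c3 \<Lambda>. c1 \<noteq> 0 \<and> c2 \<noteq> 0 \<and>
             (\<forall>u\<in>I. \<delta> u = c2) \<and> (\<forall>u\<in>I. g u = c1) \<and>
             (\<forall>u\<in>I. (\<Lambda> has_real_derivative lam u) (at u)) \<and>
             (\<forall>u\<in>I. f u = c1 * c2 * \<Lambda> u + c3)))"
proof
  assume coeffs: "\<forall>u\<in>I. div_coeffs_vanish \<delta> f g \<kappa> lam u"
  obtain u0 where u0: "u0 \<in> I" "g u0 \<noteq> 0" using g_nz by blast
  define c where "c = g u0 * \<delta> u0"
  have "c \<noteq> 0" using u0 \<delta>_nz unfolding c_def by simp
  note solution = div_coeffs_vanish_on_interval_imp[OF \<open>a < b\<close>, folded I_def, OF diff \<delta>_nz coeffs u0]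
  have "((\<lambda>x. f x / c) has_real_derivative lam u) (at u)" if "u \<in> I" for u
  proof -
    have "(f has_real_derivative c * lam u) (at u)"
      using solution[OF that] unfolding c_def by blast
    from DERIV_cdivide[OF this, of c] show ?thesis
      using \<open>c \<noteq> 0\<close> by simp
  qed
  moreover have "f u = g u0 * \<delta> u0 * (f u / c) + 0" for u
    using \<open>c \<noteq> 0\<close> unfolding c_def by simp
  ultimately show "(\<forall>u\<in>I. \<kappa> u = 0) \<and> (\<exists>c1 c2 c3 \<Lambda>. c1 \<noteq> 0 \<and> c2 \<noteq> 0 \<and>
      (\<forall>u\<in>I. \<delta> u = c2) \<and> (\<forall>u\<in>I. g u = c1) \<and>
      (\<forall>u\<in>I. (\<Lambda> has_real_derivative lam u) (at u)) \<and> (\<forall>u\<in>I. f u = c1 * c2 * \<Lambda> u + c3))"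
    using solution u0 \<delta>_nz by blast
next
  assume "(\<forall>u\<in>I. \<kappa> u = 0) \<and> (\<exists>c1 c2 c3 \<Lambda>. c1 \<noteq> 0 \<and> c2 \<noteq> 0 \<and>
      (\<forall>u\<in>I. \<delta> u = c2) \<and> (\<forall>u\<in>I. g u = c1) \<and>
      (\<forall>u\<in>I. (\<Lambda> has_real_derivative lam u) (at u)) \<and> (\<forall>u\<in>I. f u = c1 * c2 * \<Lambda> u + c3))"
  then obtain c1 c2 c3 \<Lambda> where \<kappa>: "\<forall>u\<in>I. \<kappa> u = 0" and c2: "c2 \<noteq> 0"
    and \<delta>: "\<forall>u\<in>I. \<delta> u = c2" and g: "\<forall>u\<in>I. g u = c1"
    and \<Lambda>: "\<forall>u\<in>I. (\<Lambda> has_real_derivative lam u) (at u)"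
    and f: "\<forall>u\<in>I. f u = c1 * c2 * \<Lambda> u + c3" by blast
  show "\<forall>u\<in>I. div_coeffs_vanish \<delta> f g \<kappa> lam u"
  proof
    fix u assume "u \<in> I"
    then have near: "\<forall>\<^sub>F x in nhds u. x \<in> I"
      unfolding I_def by (intro eventually_nhds_in_open) auto
    have "deriv \<delta> u = deriv (\<lambda>_. c2) u" "deriv g u = deriv (\<lambda>_. c1) u"
      "deriv f u = deriv (\<lambda>x. c1 * c2 * \<Lambda> x + c3) u"
      by (rule deriv_cong_ev[OF eventually_mono[OF near]]; use \<delta> g f in auto)+
    moreover have "deriv (\<lambda>x. c1 * c2 * \<Lambda> x + c3) u = c1 * c2 * lam u"
      using \<Lambda> \<open>u \<in> I\<close> by (auto intro!: DERIV_imp_deriv derivative_eq_intros)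
    ultimately show "div_coeffs_vanish \<delta> f g \<kappa> lam u"
      using \<kappa> \<delta> g c2 \<open>u \<in> I\<close> by (simp add: div_coeffs_vanish_def)
  qed
qed

theorem proposition8:
  fixes s e :: "real \<Rightarrow> real^3" and f g :: "real \<Rightarrow> real" and a b c d :: real
  defines "I \<equiv> {a<..<b}" and "J \<equiv> {c<..<d}"
  assumes "a < b" and "c < d"
    and ruled: "standard_ruled I s e"
    and skew: "\<forall>u\<in>I. dparam s e u \<noteq> 0"
    and f_diff: "\<forall>u\<in>I. f differentiable (at u)"
    and g_diff: "\<forall>u\<in>I. g differentiable (at u)"
    and q_nz: "\<forall>u\<in>I. \<forall>v\<in>J. qfun s e f g u v \<noteq> 0"
    and f_nz: "\<exists>u\<in>I. f u \<noteq> 0"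
    and g_nz: "\<exists>u\<in>I. g u \<noteq> 0"
  shows "(\<forall>u\<in>I. \<forall>v\<in>J. divI_T s e f g u v = 0) \<longleftrightarrow>
         ((\<forall>u\<in>I. kappa e u = 0) \<and>
          (\<exists>c1 c2 c3 \<Lambda>. c1 \<noteq> 0 \<and> c2 \<noteq> 0 \<and>
             (\<forall>u\<in>I. dparam s e u = c2) \<and> (\<forall>u\<in>I. g u = c1) \<and>
             (\<forall>u\<in>I. (\<Lambda> has_real_derivative lambda_inv s e u) (at u)) \<and>
             (\<forall>u\<in>I. f u = c1 * c2 * \<Lambda> u + c3)))"
proof -
  have "open I" "infinite J"
    unfolding I_def J_def using \<open>c < d\<close> by auto
  have diff: "\<forall>u\<in>I. dparam s e differentiable (at u) \<and> f differentiable (at u) \<and> g differentiable (at u)"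
    using dparam_differentiable[OF ruled] f_diff g_diff by blast
  have "(\<forall>v\<in>J. divI_T s e f g u v = 0) \<longleftrightarrow>
      div_coeffs_vanish (dparam s e) f g (kappa e) (lambda_inv s e) u" if "u \<in> I" for u
  proof -
    from diff that have "dparam s e differentiable (at u)" "f differentiable (at u)"
      "g differentiable (at u)" by blast+
    then show ?thesis by (rule divI_T_vanishes_iff[OF \<open>open I\<close> that skew \<open>infinite J\<close>])
  qed
  then have "(\<forall>u\<in>I. \<forall>v\<in>J. divI_T s e f g u v = 0) \<longleftrightarrow>
      (\<forall>u\<in>I. div_coeffs_vanish (dparam s e) f g (kappa e) (lambda_inv s e) u)"
    by (rule ball_cong[OF refl])
  also note div_coeffs_vanish_on_interval_iff[OF \<open>a < b\<close>, folded I_def, OF diff skew g_nz]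
  finally show ?thesis .
qed

end
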